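(* For every formula $\varphi$ there exists a formula $\varphi'$ with $\varphi'\equiv\varphi$ such that $\varphi'$ is in first normal form (i.e. $\mathrm{ubw}(\varphi') = 0$), $|\varphi'| \leq 4^{2|\varphi|}\cdot|\varphi|$, for every subformula $\mathbf{GF}\psi$ of $\varphi'$ the formula $\psi$ is a subformula of $\varphi$, and every subformula of $\varphi'$ of the form $\mathbf{FG}\chi$ is also a subformula of $\varphi$.
   Context: Fix a finite set $Ap$ of atomic propositions. A word is an infinite sequence $w = w[0]w[1]\dots$ of letters of $2^{Ap}$, and $w_i$ denotes the suffix $w[i]w[i+1]\dots$. Formulas are generated by $\varphi ::= \mathbf{true} \mid \mathbf{false} \mid a \mid \neg a \mid \varphi\wedge\varphi \mid \varphi\vee\varphi \mid \mathbf{X}\varphi \mid \varphi\,\mathbf{U}\,\varphi \mid \varphi\,\mathbf{W}\,\varphi \mid \mathbf{GF}\varphi \mid \mathbf{FG}\varphi$ ($a\in Ap$), where $\mathbf{GF}$, $\mathbf{FG}$ are single unary operators (limit operators). Semantics: $w\models a$ iff $a\in w[0]$, $w\models\neg a$ iff $a\notin w[0]$, Boolean constants and connectives as usual; $w\models\mathbf{X}\varphi$ iff $w_1\models\varphi$; $w\models\varphi\mathbf{U}\psi$ iff $\exists k$: $w_k\models\psi$ and $\forall j<k$: $w_j\models\varphi$; $w\models\varphi\mathbf{W}\psi$ iff ($\forall k$: $w_k\models\varphi$) or $w\models\varphi\mathbf{U}\psi$; $w\models\mathbf{GF}\varphi$ iff $w_k\models\varphi$ for infinitely many $k$; $w\models\mathbf{FG}\varphi$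 iff $\exists n\,\forall k\geq n$: $w_k\models\varphi$. $\varphi\equiv\psi$ means both are satisfied by the same words. The syntax tree $T_\varphi$ has leaves $\mathbf{true},\mathbf{false},a,\neg a$ and one internal node per operator occurrence; $|\varphi|$ is its number of nodes. A $\mathbf{U}$-node (resp. $\mathbf{W}$-node, limit node) is a node whose subformula has top operator $\mathbf{U}$ (resp. $\mathbf{W}$, $\mathbf{GF}$ or $\mathbf{FG}$). A node is under another if it is a proper descendant of it. $\mathrm{ubw}(\varphi)$ is the number of $\mathbf{U}$-nodes of $T_\varphi$ that are under some $\mathbf{W}$-node but not under any limit node. A formula $\varphi$ is in first normal form if $\mathrm{ubw}(\varphi)=0$. *)

theory Defs
  imports Main
begin

text \<open>LTL formulas in negation normal form with limit operators GF and FG,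
  over atomic propositions of type 'a (the finite set Ap is the type 'a, assumed finite
  in the theorem).\<close>

datatype 'a ltl =
    LTrue
  | LFalse
  | Prop 'a
  | NProp 'a
  | And "'a ltl" "'a ltl"
  | Or "'a ltl" "'a ltl"
  | Next "'a ltl"
  | Until "'a ltl" "'a ltl"
  | WeakUntil "'a ltl" "'a ltl"
  | GF "'a ltl"
  | FG "'a ltl"

type_synonym 'a word = "nat \<Rightarrow> 'a set"

definition suffix :: "nat \<Rightarrow> 'a word \<Rightarrow> 'a word" where
  "suffix i w = (\<lambda>n. w (i + n))"

fun sat :: "'a word \<Rightarrow> 'a ltl \<Rightarrow> bool" where
  "sat w LTrue = True"
| "sat w LFalse = False"
| "sat w (Prop a) = (a \<in> w 0)"
| "sat w (NProp a) = (a \<notin> w 0)"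
| "sat w (And \<phi> \<psi>) = (sat w \<phi> \<and> sat w \<psi>)"
| "sat w (Or \<phi> \<psi>) = (sat w \<phi> \<or> sat w \<psi>)"
| "sat w (Next \<phi>) = sat (suffix 1 w) \<phi>"
| "sat w (Until \<phi> \<psi>) =
     (\<exists>k. sat (suffix k w) \<psi> \<and> (\<forall>j<k. sat (suffix j w) \<phi>))"
| "sat w (WeakUntil \<phi> \<psi>) =
     ((\<forall>k. sat (suffix k w) \<phi>) \<or>
      (\<exists>k. sat (suffix k w) \<psi> \<and> (\<forall>j<k. sat (suffix j w) \<phi>)))"
| "sat w (GF \<phi>) = infinite {k. sat (suffix k w) \<phi>}"
| "sat w (FG \<phi>) = (\<exists>n. \<forall>k\<ge>n. sat (suffix k w) \<phi>)"

definition equiv_ltl :: "'a ltl \<Rightarrow> 'a ltl \<Rightarrow> bool" where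
  "equiv_ltl \<phi> \<psi> \<longleftrightarrow> (\<forall>w. sat w \<phi> = sat w \<psi>)"

fun size_ltl :: "'a ltl \<Rightarrow> nat" where
  "size_ltl LTrue = 1"
| "size_ltl LFalse = 1"
| "size_ltl (Prop a) = 1"
| "size_ltl (NProp a) = 1"
| "size_ltl (And \<phi> \<psi>) = 1 + size_ltl \<phi> + size_ltl \<psi>"
| "size_ltl (Or \<phi> \<psi>) = 1 + size_ltl \<phi> + size_ltl \<psi>"
| "size_ltl (Next \<phi>) = 1 + size_ltl \<phi>"
| "size_ltl (Until \<phi> \<psi>) = 1 + size_ltl \<phi> + size_ltl \<psi>"
| "size_ltl (WeakUntil \<phi> \<psi>) = 1 + size_ltl \<phi> + size_ltl \<psi>"
| "size_ltl (GF \<phi>) = 1 + size_ltl \<phi>"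
| "size_ltl (FG \<phi>) = 1 + size_ltl \<phi>"

fun subformulas :: "'a ltl \<Rightarrow> 'a ltl set" where
  "subformulas LTrue = {LTrue}"
| "subformulas LFalse = {LFalse}"
| "subformulas (Prop a) = {Prop a}"
| "subformulas (NProp a) = {NProp a}"
| "subformulas (And \<phi> \<psi>) = insert (And \<phi> \<psi>) (subformulas \<phi> \<union> subformulas \<psi>)"
| "subformulas (Or \<phi> \<psi>) = insert (Or \<phi> \<psi>) (subformulas \<phi> \<union> subformulas \<psi>)"
| "subformulas (Next \<phi>) = insert (Next \<phi>) (subformulas \<phi>)"
| "subformulas (Until \<phi> \<psi>) = insert (Until \<phi> \<psi>) (subformulas \<phi> \<union> subformulas \<psi>)"
| "subformulas (WeakUntil \<phi> \<psi>) =
     insert (WeakUntil \<phi> \<psi>) (subformulas \<phi> \<union> subformulas \<psi>)"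
| "subformulas (GF \<phi>) = insert (GF \<phi>) (subformulas \<phi>)"
| "subformulas (FG \<phi>) = insert (FG \<phi>) (subformulas \<phi>)"

text \<open>ubw_aux b \<phi>: number of U-nodes of \<phi> that are under some W-node (where b says
  whether \<phi> itself is already under a W-node of the enclosing tree) and not under any
  limit node.\<close>
fun ubw_aux :: "bool \<Rightarrow> 'a ltl \<Rightarrow> nat" where
  "ubw_aux b LTrue = 0"
| "ubw_aux b LFalse = 0"
| "ubw_aux b (Prop a) = 0"
| "ubw_aux b (NProp a) = 0"
| "ubw_aux b (And \<phi> \<psi>) = ubw_aux b \<phi> + ubw_aux b \<psi>"
| "ubw_aux b (Or \<phi> \<psi>) = ubw_aux b \<phi> + ubw_aux b \<psi>"
| "ubw_aux b (Next \<phi>) = ubw_aux b \<phi>"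
| "ubw_aux b (Until \<phi> \<psi>) = (if b then 1 else 0) + ubw_aux b \<phi> + ubw_aux b \<psi>"
| "ubw_aux b (WeakUntil \<phi> \<psi>) = ubw_aux True \<phi> + ubw_aux True \<psi>"
| "ubw_aux b (GF \<phi>) = 0"
| "ubw_aux b (FG \<phi>) = 0"

definition ubw :: "'a ltl \<Rightarrow> nat" where
  "ubw \<phi> = ubw_aux False \<phi>"

definition first_normal_form :: "'a ltl \<Rightarrow> bool" where
  "first_normal_form \<phi> \<longleftrightarrow> ubw \<phi> = 0"

end

theory Submission
  imports Defs
begin

text \<open>
  Fix a word \<open>w\<close> and let \<open>M\<close> be the set of subformulas \<open>\<psi>\<close> of \<open>\<phi>\<close> with \<open>w \<Turnstile> GF \<psi>\<close>.
  Along \<open>w\<close>, an until-subformula in \<open>M\<close> is equivalent to the corresponding weak until (its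
  right argument is bound to occur), and one outside \<open>M\<close> is false from some point on. Replacing
  the \<open>U\<close>-nodes accordingly yields a \<open>U\<close>-free formula \<open>\<phi>[M]\<close> that implies \<open>\<phi>\<close> on every suffix
  and is implied by \<open>\<phi>\<close> on all late enough suffixes. Since \<open>\<phi>\<^sub>1 W \<phi>\<^sub>2 \<equiv> \<phi>\<^sub>1 U (\<phi>\<^sub>2 \<or> G \<phi>\<^sub>1)\<close>
  and the witness for the until may be chosen late, \<open>G \<phi>\<^sub>1\<close> may be replaced by \<open>G (\<phi>\<^sub>1[M])\<close>;
  rewriting every \<open>W\<close>-node in this way leaves no \<open>U\<close> below a \<open>W\<close>. As \<open>M\<close> depends on \<open>w\<close>, the
  normal form is the disjunction, over all sets \<open>M\<close> of subformulas, of \<open>\<And>\<psi>\<in>M. GF \<psi>\<close> conjoined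
  with the rewritten \<open>\<phi>\<close>; its \<open>2\<^bsup>|\<phi>|\<^esup>\<close> disjuncts have quadratic size.
\<close>

lemma suffix_suffix [simp]: "suffix k (suffix i w) = suffix (i + k) w"
  by (simp add: suffix_def add.assoc)

lemma subformula_self: "\<phi> \<in> subformulas \<phi>"
  by (cases \<phi>) auto

lemma subformulas_trans: "\<psi> \<in> subformulas \<phi> \<Longrightarrow> subformulas \<psi> \<subseteq> subformulas \<phi>"
  by (induction \<phi>) auto

lemma subformula_of_GF:
  assumes "GF \<chi> \<in> subformulas \<phi>"
  shows "\<chi> \<in> subformulas \<phi>"
proof -
  from assms have "subformulas (GF \<chi>) \<subseteq> subformulas \<phi>"
    by (rule subformulas_trans)
  then show ?thesis
    using subformula_self[of \<chi>] by auto
qed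

lemma subformulas_size_le: "\<psi> \<in> subformulas \<phi> \<Longrightarrow> size_ltl \<psi> \<le> size_ltl \<phi>"
  by (induction \<phi>) auto

lemma size_ltl_pos: "0 < size_ltl \<phi>"
  by (cases \<phi>) auto

lemma finite_subformulas: "finite (subformulas \<phi>)"
  by (induction \<phi>) auto

lemma card_subformulas_le: "card (subformulas \<phi>) \<le> size_ltl \<phi>"
  by (induction \<phi>) (auto intro!: card_insert_le_m1 card_Un_le[THEN order_trans]
      simp: finite_subformulas card_insert_if intro: le_trans[OF card_Un_le])

definition recurrent :: "'a word \<Rightarrow> 'a ltl set" where
  "recurrent w = {\<phi>. sat w (GF \<phi>)}"

lemma recurrent_iff_frequently:
  "\<phi> \<in> recurrent w \<longleftrightarrow> (\<exists>\<^sub>F k in sequentially. sat (suffix k w) \<phi>)"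
  by (simp add: recurrent_def frequently_cofinite flip: cofinite_eq_sequentially)

lemma recurrent_suffix [simp]: "recurrent (suffix i w) = recurrent w"
proof -
  have shift: "(\<exists>\<^sub>F k in sequentially. P (k + i)) \<longleftrightarrow> (\<exists>\<^sub>F k in sequentially. P k)" for P :: "nat \<Rightarrow> bool"
    unfolding frequently_def using eventually_sequentially_seg[of "\<lambda>k. \<not> P k"] by simp
  show ?thesis
    using shift[of "\<lambda>k. sat (suffix k w) \<phi>" for \<phi>]
    by (simp add: set_eq_iff recurrent_iff_frequently add.commute)
qed

lemma eventually_not_sat_if_not_recurrent:
  assumes "\<phi> \<notin> recurrent w"
  shows "\<forall>\<^sub>F i in sequentially. \<not> sat (suffix i w) \<phi>"
  using assms by (simp add: recurrent_iff_frequently not_frequently)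

abbreviation Always :: "'a ltl \<Rightarrow> 'a ltl" where
  "Always \<phi> \<equiv> WeakUntil \<phi> LFalse"

lemma sat_Until_mono:
  assumes "sat w (Until \<phi> \<psi>)"
    and "\<And>k. sat (suffix k w) \<phi> \<Longrightarrow> sat (suffix k w) \<phi>'"
    and "\<And>k. sat (suffix k w) \<psi> \<Longrightarrow> sat (suffix k w) \<psi>'"
  shows "sat w (Until \<phi>' \<psi>')"
  using assms by auto

lemma sat_WeakUntil_mono:
  assumes "sat w (WeakUntil \<phi> \<psi>)"
    and "\<And>k. sat (suffix k w) \<phi> \<Longrightarrow> sat (suffix k w) \<phi>'"
    and "\<And>k. sat (suffix k w) \<psi> \<Longrightarrow> sat (suffix k w) \<psi>'"
  shows "sat w (WeakUntil \<phi>' \<psi>')"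
  using assms by simp blast

lemma sat_WeakUntil_iff_Until_Always:
  "sat w (WeakUntil \<phi> \<psi>) \<longleftrightarrow> sat w (Until \<phi> (Or \<psi> (Always \<phi>)))"
proof
  assume "sat w (WeakUntil \<phi> \<psi>)"
  then show "sat w (Until \<phi> (Or \<psi> (Always \<phi>)))"
    by (auto intro: exI[of _ 0])
next
  assume "sat w (Until \<phi> (Or \<psi> (Always \<phi>)))"
  then obtain k where "sat (suffix k w) \<psi> \<or> (\<forall>i. sat (suffix (k + i) w) \<phi>)"
    and "\<forall>j<k. sat (suffix j w) \<phi>"
    by auto
  then show "sat w (WeakUntil \<phi> \<psi>)"
    by simp (metis le_add_diff_inverse not_le)
qed

lemma sat_Until_iff_WeakUntil_if_recurrent:
  assumes "Until \<phi> \<psi> \<in> recurrent w"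
  shows "sat w (Until \<phi> \<psi>) \<longleftrightarrow> sat w (WeakUntil \<phi> \<psi>)"
proof -
  obtain n where "sat (suffix n w) (Until \<phi> \<psi>)"
    using assms frequently_ex unfolding recurrent_iff_frequently by blast
  then obtain k where "sat (suffix (n + k) w) \<psi>" by auto
  then show ?thesis by auto
qed

lemma eventually_forever:
  "\<forall>\<^sub>F i in sequentially. P i \<Longrightarrow> \<forall>\<^sub>F i in sequentially. \<forall>k. P (i + k)"
  unfolding eventually_sequentially by (meson le_add1 order_trans)

lemma eventually_sat_Until_mono:
  assumes "\<forall>\<^sub>F i in sequentially. sat (suffix i w) \<phi> \<longrightarrow> sat (suffix i w) \<phi>'"
    and "\<forall>\<^sub>F i in sequentially. sat (suffix i w) \<psi> \<longrightarrow> sat (suffix i w) \<psi>'"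
  shows "\<forall>\<^sub>F i in sequentially. sat (suffix i w) (Until \<phi> \<psi>) \<longrightarrow> sat (suffix i w) (Until \<phi>' \<psi>')"
  using eventually_forever[OF eventually_conj[OF assms]]
proof (rule eventually_mono, intro impI)
  fix i
  assume mono: "\<forall>k. (sat (suffix (i + k) w) \<phi> \<longrightarrow> sat (suffix (i + k) w) \<phi>') \<and>
    (sat (suffix (i + k) w) \<psi> \<longrightarrow> sat (suffix (i + k) w) \<psi>')"
  assume "sat (suffix i w) (Until \<phi> \<psi>)"
  then show "sat (suffix i w) (Until \<phi>' \<psi>')"
    by (rule sat_Until_mono) (use mono in simp)+
qed

lemma eventually_sat_WeakUntil_mono:
  assumes "\<forall>\<^sub>F i in sequentially. sat (suffix i w) \<phi> \<longrightarrow> sat (suffix i w) \<phi>'"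
    and "\<forall>\<^sub>F i in sequentially. sat (suffix i w) \<psi> \<longrightarrow> sat (suffix i w) \<psi>'"
  shows "\<forall>\<^sub>F i in sequentially.
    sat (suffix i w) (WeakUntil \<phi> \<psi>) \<longrightarrow> sat (suffix i w) (WeakUntil \<phi>' \<psi>')"
  using eventually_forever[OF eventually_conj[OF assms]]
proof (rule eventually_mono, intro impI)
  fix i
  assume mono: "\<forall>k. (sat (suffix (i + k) w) \<phi> \<longrightarrow> sat (suffix (i + k) w) \<phi>') \<and>
    (sat (suffix (i + k) w) \<psi> \<longrightarrow> sat (suffix (i + k) w) \<psi>')"
  assume "sat (suffix i w) (WeakUntil \<phi> \<psi>)"
  then show "sat (suffix i w) (WeakUntil \<phi>' \<psi>')"
    by (rule sat_WeakUntil_mono) (use mono in simp)+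
qed

fun weaken :: "'a ltl set \<Rightarrow> 'a ltl \<Rightarrow> 'a ltl" where
  "weaken M (And \<phi> \<psi>) = And (weaken M \<phi>) (weaken M \<psi>)"
| "weaken M (Or \<phi> \<psi>) = Or (weaken M \<phi>) (weaken M \<psi>)"
| "weaken M (Next \<phi>) = Next (weaken M \<phi>)"
| "weaken M (Until \<phi> \<psi>) =
     (if Until \<phi> \<psi> \<in> M then WeakUntil (weaken M \<phi>) (weaken M \<psi>) else LFalse)"
| "weaken M (WeakUntil \<phi> \<psi>) = WeakUntil (weaken M \<phi>) (weaken M \<psi>)"
| "weaken M \<phi> = \<phi>"

lemma weaken_sound:
  assumes "M \<subseteq> recurrent w" and "sat w (weaken M \<phi>)"
  shows "sat w \<phi>"
  using assms
proof (induction \<phi> arbitrary: w)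
  case (Until \<phi> \<psi>)
  have M: "M \<subseteq> recurrent (suffix k w)" for k
    using Until.prems(1) by simp
  from Until.prems(2) have "Until \<phi> \<psi> \<in> M"
    and weak: "sat w (WeakUntil (weaken M \<phi>) (weaken M \<psi>))"
    by (auto split: if_splits)
  have "sat w (WeakUntil \<phi> \<psi>)"
    using weak by (rule sat_WeakUntil_mono) (erule Until.IH[OF M])+
  then show ?case
    using \<open>Until \<phi> \<psi> \<in> M\<close> Until.prems(1) sat_Until_iff_WeakUntil_if_recurrent by blast
next
  case (WeakUntil \<phi> \<psi>)
  have M: "M \<subseteq> recurrent (suffix k w)" for k
    using WeakUntil.prems(1) by simp
  from WeakUntil.prems(2) have "sat w (WeakUntil (weaken M \<phi>) (weaken M \<psi>))"
    by simp
  then show ?case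
    by (rule sat_WeakUntil_mono) (erule WeakUntil.IH[OF M])+
qed auto

lemma weaken_eventually_complete:
  assumes "subformulas \<phi> \<inter> recurrent w \<subseteq> M"
  shows "\<forall>\<^sub>F i in sequentially. sat (suffix i w) \<phi> \<longrightarrow> sat (suffix i w) (weaken M \<phi>)"
  using assms
proof (induction \<phi>)
  case (And \<phi> \<psi>)
  then have "\<forall>\<^sub>F i in sequentially.
    (sat (suffix i w) \<phi> \<longrightarrow> sat (suffix i w) (weaken M \<phi>)) \<and>
    (sat (suffix i w) \<psi> \<longrightarrow> sat (suffix i w) (weaken M \<psi>))"
    by (intro eventually_conj) auto
  then show ?case by (rule eventually_mono) auto
next
  case (Or \<phi> \<psi>)
  then have "\<forall>\<^sub>F i in sequentially.
    (sat (suffix i w) \<phi> \<longrightarrow> sat (suffix i w) (weaken M \<phi>)) \<and>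
    (sat (suffix i w) \<psi> \<longrightarrow> sat (suffix i w) (weaken M \<psi>))"
    by (intro eventually_conj) auto
  then show ?case by (rule eventually_mono) auto
next
  case (Next \<phi>)
  then have "\<forall>\<^sub>F i in sequentially. sat (suffix i w) \<phi> \<longrightarrow> sat (suffix i w) (weaken M \<phi>)"
    by auto
  then show ?case
    using eventually_sequentially_Suc[of "\<lambda>i. sat (suffix i w) \<phi> \<longrightarrow> sat (suffix i w) (weaken M \<phi>)"]
    by simp
next
  case (Until \<phi> \<psi>)
  show ?case
  proof (cases "Until \<phi> \<psi> \<in> M")
    case True
    have "\<forall>\<^sub>F i in sequentially.
      sat (suffix i w) (Until \<phi> \<psi>) \<longrightarrow> sat (suffix i w) (Until (weaken M \<phi>) (weaken M \<psi>))"
      using Until by (intro eventually_sat_Until_mono) auto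
    then show ?thesis
      by (rule eventually_mono) (auto simp: True)
  next
    case False
    then have "Until \<phi> \<psi> \<notin> recurrent w"
      using Until.prems by auto
    then show ?thesis
      by (rule eventually_mono[OF eventually_not_sat_if_not_recurrent]) blast
  qed
next
  case (WeakUntil \<phi> \<psi>)
  then show ?case
    by (simp only: weaken.simps) (intro eventually_sat_WeakUntil_mono; auto)
qed auto

lemma ubw_aux_weaken: "ubw_aux b (weaken M \<phi>) = 0"
  by (induction \<phi> arbitrary: b) auto

lemma GF_subformulas_weaken: "GF \<chi> \<in> subformulas (weaken M \<phi>) \<Longrightarrow> GF \<chi> \<in> subformulas \<phi>"
  by (induction \<phi>) (auto split: if_splits)

lemma FG_subformulas_weaken: "FG \<chi> \<in> subformulas (weaken M \<phi>) \<Longrightarrow> FG \<chi> \<in> subformulas \<phi>"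
  by (induction \<phi>) (auto split: if_splits)

lemma size_weaken_le: "size_ltl (weaken M \<phi>) \<le> size_ltl \<phi>"
  by (induction \<phi>) auto

fun strengthen :: "'a ltl set \<Rightarrow> 'a ltl \<Rightarrow> 'a ltl" where
  "strengthen M (And \<phi> \<psi>) = And (strengthen M \<phi>) (strengthen M \<psi>)"
| "strengthen M (Or \<phi> \<psi>) = Or (strengthen M \<phi>) (strengthen M \<psi>)"
| "strengthen M (Next \<phi>) = Next (strengthen M \<phi>)"
| "strengthen M (Until \<phi> \<psi>) = Until (strengthen M \<phi>) (strengthen M \<psi>)"
| "strengthen M (WeakUntil \<phi> \<psi>) =
     Until (strengthen M \<phi>) (Or (strengthen M \<psi>) (Always (weaken M \<phi>)))"
| "strengthen M \<phi> = \<phi>"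

lemma strengthen_sound:
  assumes "M \<subseteq> recurrent w" and "sat w (strengthen M \<phi>)"
  shows "sat w \<phi>"
  using assms
proof (induction \<phi> arbitrary: w)
  case (Until \<phi> \<psi>)
  have M: "M \<subseteq> recurrent (suffix k w)" for k
    using Until.prems(1) by simp
  from Until.prems(2) have "sat w (Until (strengthen M \<phi>) (strengthen M \<psi>))"
    by simp
  then show ?case
    by (rule sat_Until_mono) (erule Until.IH[OF M])+
next
  case (WeakUntil \<phi> \<psi>)
  have M: "M \<subseteq> recurrent (suffix k w)" for k
    using WeakUntil.prems(1) by simp
  from WeakUntil.prems(2)
  have "sat w (Until (strengthen M \<phi>) (Or (strengthen M \<psi>) (Always (weaken M \<phi>))))"
    by simp
  then have "sat w (Until \<phi> (Or \<psi> (Always \<phi>)))"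
  proof (rule sat_Until_mono)
    fix k
    assume "sat (suffix k w) (Or (strengthen M \<psi>) (Always (weaken M \<phi>)))"
    then show "sat (suffix k w) (Or \<psi> (Always \<phi>))"
      using WeakUntil.IH(2)[OF M] weaken_sound[OF M] by auto
  qed (erule WeakUntil.IH(1)[OF M])
  then show ?case
    by (simp only: sat_WeakUntil_iff_Until_Always)
qed auto

lemma strengthen_complete:
  assumes "subformulas \<phi> \<inter> recurrent w \<subseteq> M" and "sat w \<phi>"
  shows "sat w (strengthen M \<phi>)"
  using assms
proof (induction \<phi> arbitrary: w)
  case (Until \<phi> \<psi>)
  have "subformulas \<phi> \<inter> recurrent (suffix k w) \<subseteq> M" "subformulas \<psi> \<inter> recurrent (suffix k w) \<subseteq> M" for k
    using Until.prems(1) by auto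
  then have strengthen_\<phi>: "sat (suffix k w) \<phi> \<Longrightarrow> sat (suffix k w) (strengthen M \<phi>)"
    and strengthen_\<psi>: "sat (suffix k w) \<psi> \<Longrightarrow> sat (suffix k w) (strengthen M \<psi>)" for k
    using Until.IH by blast+
  have "sat w (Until (strengthen M \<phi>) (strengthen M \<psi>))"
    using Until.prems(2) by (rule sat_Until_mono) (fact strengthen_\<phi> strengthen_\<psi>)+
  then show ?case
    by simp
next
  case (WeakUntil \<phi> \<psi>)
  have "subformulas \<phi> \<inter> recurrent (suffix k w) \<subseteq> M" "subformulas \<psi> \<inter> recurrent (suffix k w) \<subseteq> M" for k
    using WeakUntil.prems(1) by auto
  then have strengthen_\<phi>: "sat (suffix k w) \<phi> \<Longrightarrow> sat (suffix k w) (strengthen M \<phi>)"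
    and strengthen_\<psi>: "sat (suffix k w) \<psi> \<Longrightarrow> sat (suffix k w) (strengthen M \<psi>)" for k
    using WeakUntil.IH by blast+
  consider "sat w (Until \<phi> \<psi>)" | "sat w (Always \<phi>)"
    using WeakUntil.prems(2) by auto
  then show ?case
  proof cases
    case 1
    then have "sat w (Until (strengthen M \<phi>) (strengthen M \<psi>))"
      by (rule sat_Until_mono) (fact strengthen_\<phi> strengthen_\<psi>)+
    then show ?thesis
      by auto
  next
    case 2
    obtain N where N: "\<forall>i\<ge>N. sat (suffix i w) \<phi> \<longrightarrow> sat (suffix i w) (weaken M \<phi>)"
      using weaken_eventually_complete[of \<phi> w M] WeakUntil.prems(1)
      by (auto simp: eventually_sequentially)
    have "sat (suffix N w) (Always (weaken M \<phi>))"
      using 2 N by simp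
    moreover have "\<forall>j<N. sat (suffix j w) (strengthen M \<phi>)"
      using 2 strengthen_\<phi> by simp
    ultimately show ?thesis
      by auto
  qed
next
  case (Next \<phi>)
  have "subformulas \<phi> \<inter> recurrent (suffix 1 w) \<subseteq> M"
    using Next.prems(1) by auto
  then show ?case
    using Next.IH Next.prems(2) by simp
qed auto

lemma ubw_aux_strengthen: "ubw_aux False (strengthen M \<phi>) = 0"
  by (induction \<phi>) (auto simp: ubw_aux_weaken)

lemma GF_subformulas_strengthen: "GF \<chi> \<in> subformulas (strengthen M \<phi>) \<Longrightarrow> GF \<chi> \<in> subformulas \<phi>"
  by (induction \<phi>) (auto dest: GF_subformulas_weaken)

lemma FG_subformulas_strengthen: "FG \<chi> \<in> subformulas (strengthen M \<phi>) \<Longrightarrow> FG \<chi> \<in> subformulas \<phi>"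
  by (induction \<phi>) (auto dest: FG_subformulas_weaken)

lemma size_strengthen_le: "size_ltl (strengthen M \<phi>) \<le> (size_ltl \<phi>)\<^sup>2"
proof (induction \<phi>)
  case (WeakUntil \<phi> \<psi>)
  then show ?case
    using size_weaken_le[of M \<phi>] size_ltl_pos[of \<phi>] size_ltl_pos[of \<psi>]
    by (simp add: power2_eq_square algebra_simps)
qed (auto simp: power2_eq_square algebra_simps)

text \<open>\<open>split_recurrent \<psi>s M \<phi>\<close> is the disjunction, over all \<open>N \<subseteq> set \<psi>s\<close>, of
  \<open>(\<And>\<psi>\<in>N. GF \<psi>) \<and> strengthen (M \<union> N) \<phi>\<close>, built as a decision tree on the elements of \<open>\<psi>s\<close>.\<close>

fun split_recurrent :: "'a ltl list \<Rightarrow> 'a ltl set \<Rightarrow> 'a ltl \<Rightarrow> 'a ltl" where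
  "split_recurrent [] M \<phi> = strengthen M \<phi>"
| "split_recurrent (\<psi> # \<psi>s) M \<phi> =
     Or (And (GF \<psi>) (split_recurrent \<psi>s (insert \<psi> M) \<phi>)) (split_recurrent \<psi>s M \<phi>)"

lemma split_recurrent_sound:
  "M \<subseteq> recurrent w \<Longrightarrow> sat w (split_recurrent \<psi>s M \<phi>) \<Longrightarrow> sat w \<phi>"
proof (induction \<psi>s arbitrary: M)
  case Nil
  then show ?case by (auto intro: strengthen_sound)
next
  case (Cons \<psi> \<psi>s)
  from Cons.prems(2) consider
    "\<psi> \<in> recurrent w" "sat w (split_recurrent \<psi>s (insert \<psi> M) \<phi>)"
    | "sat w (split_recurrent \<psi>s M \<phi>)"
    by (auto simp: recurrent_def)
  then show ?case
    by cases (use Cons.IH Cons.prems(1) in blast)+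
qed

lemma split_recurrent_complete:
  "subformulas \<phi> \<inter> recurrent w \<subseteq> M \<union> set \<psi>s \<Longrightarrow> sat w \<phi> \<Longrightarrow> sat w (split_recurrent \<psi>s M \<phi>)"
proof (induction \<psi>s arbitrary: M)
  case Nil
  then show ?case by (auto intro: strengthen_complete)
next
  case (Cons \<psi> \<psi>s)
  then show ?case by (cases "\<psi> \<in> recurrent w") (auto simp: recurrent_def)
qed

lemma sat_split_recurrent_iff:
  "subformulas \<phi> \<subseteq> set \<psi>s \<Longrightarrow> sat w (split_recurrent \<psi>s {} \<phi>) \<longleftrightarrow> sat w \<phi>"
  using split_recurrent_sound[of "{}"] split_recurrent_complete[of \<phi> w "{}" \<psi>s] by blast

lemma first_normal_form_split_recurrent: "first_normal_form (split_recurrent \<psi>s M \<phi>)"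
  unfolding first_normal_form_def ubw_def
  by (induction \<psi>s arbitrary: M) (auto simp: ubw_aux_strengthen)

lemma GF_subformulas_split_recurrent:
  assumes "set \<psi>s \<subseteq> subformulas \<phi>" and "GF \<chi> \<in> subformulas (split_recurrent \<psi>s M \<phi>)"
  shows "\<chi> \<in> subformulas \<phi>"
  using assms
proof (induction \<psi>s arbitrary: M)
  case Nil
  then show ?case
    by (simp add: subformula_of_GF[OF GF_subformulas_strengthen])
next
  case (Cons \<psi> \<psi>s)
  have \<psi>: "\<psi> \<in> subformulas \<phi>"
    using Cons.prems(1) by simp
  note IH = Cons.IH[OF subset_trans[OF set_subset_Cons Cons.prems(1)]]
  from Cons.prems(2) consider "\<chi> = \<psi>" | "GF \<chi> \<in> subformulas \<psi>"
    | "GF \<chi> \<in> subformulas (split_recurrent \<psi>s (insert \<psi> M) \<phi>)"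
    | "GF \<chi> \<in> subformulas (split_recurrent \<psi>s M \<phi>)"
    by simp blast
  then show ?case
  proof cases
    case 2
    then show ?thesis
      using \<psi> subformulas_trans subformula_of_GF by blast
  qed (use \<psi> IH in blast)+
qed

lemma FG_subformulas_split_recurrent:
  assumes "set \<psi>s \<subseteq> subformulas \<phi>" and "FG \<chi> \<in> subformulas (split_recurrent \<psi>s M \<phi>)"
  shows "FG \<chi> \<in> subformulas \<phi>"
  using assms
proof (induction \<psi>s arbitrary: M)
  case Nil
  then show ?case
    by (simp add: FG_subformulas_strengthen)
next
  case (Cons \<psi> \<psi>s)
  have \<psi>: "\<psi> \<in> subformulas \<phi>"
    using Cons.prems(1) by simp
  note IH = Cons.IH[OF subset_trans[OF set_subset_Cons Cons.prems(1)]]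
  from Cons.prems(2) consider "FG \<chi> \<in> subformulas \<psi>"
    | "FG \<chi> \<in> subformulas (split_recurrent \<psi>s (insert \<psi> M) \<phi>)"
    | "FG \<chi> \<in> subformulas (split_recurrent \<psi>s M \<phi>)"
    by simp blast
  then show ?case
  proof cases
    case 1
    then show ?thesis
      using \<psi> subformulas_trans by blast
  qed (use IH in blast)+
qed

lemma size_split_recurrent:
  assumes "\<forall>\<psi>\<in>set \<psi>s. size_ltl \<psi> \<le> n" and "size_ltl \<phi> \<le> n"
  shows "size_ltl (split_recurrent \<psi>s M \<phi>) + (n + 3) \<le> 2 ^ length \<psi>s * (n\<^sup>2 + n + 3)"
  using assms
proof (induction \<psi>s arbitrary: M)
  case Nil
  have "(size_ltl \<phi>)\<^sup>2 \<le> n\<^sup>2"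
    using Nil.prems(2) by (simp add: power_mono)
  then show ?case
    using order_trans[OF size_strengthen_le[of M \<phi>]] by simp
next
  case (Cons \<psi> \<psi>s)
  let ?bound = "2 ^ length \<psi>s * (n\<^sup>2 + n + 3)"
  have IH: "size_ltl (split_recurrent \<psi>s N \<phi>) + (n + 3) \<le> ?bound" for N
    using Cons by simp
  have "size_ltl \<psi> \<le> n"
    using Cons.prems(1) by simp
  then have "size_ltl (split_recurrent (\<psi> # \<psi>s) M \<phi>) + (n + 3) \<le>
    (size_ltl (split_recurrent \<psi>s (insert \<psi> M) \<phi>) + (n + 3)) +
    (size_ltl (split_recurrent \<psi>s M \<phi>) + (n + 3))"
    by simp
  also have "\<dots> \<le> ?bound + ?bound"
    using IH[of "insert \<psi> M"] IH[of M] by (rule add_mono)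
  finally show ?case
    by simp
qed

lemma square_plus_le_eight_power: "1 \<le> n \<Longrightarrow> n\<^sup>2 + n + 3 \<le> 8 ^ n * n"
  by (induction n rule: dec_induct) (auto simp: power2_eq_square algebra_simps)

theorem proposition1:
  fixes \<phi> :: "('a::finite) ltl"
  shows "\<exists>\<phi>'. equiv_ltl \<phi>' \<phi> \<and> first_normal_form \<phi>'
           \<and> size_ltl \<phi>' \<le> 4 ^ (2 * size_ltl \<phi>) * size_ltl \<phi>
           \<and> (\<forall>\<psi>. GF \<psi> \<in> subformulas \<phi>' \<longrightarrow> \<psi> \<in> subformulas \<phi>)
           \<and> (\<forall>\<chi>. FG \<chi> \<in> subformulas \<phi>' \<longrightarrow> FG \<chi> \<in> subformulas \<phi>)"
proof -
  obtain \<psi>s where \<psi>s: "set \<psi>s = subformulas \<phi>" "distinct \<psi>s"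
    using finite_distinct_list[OF finite_subformulas] by blast
  let ?n = "size_ltl \<phi>"
  let ?\<phi>' = "split_recurrent \<psi>s {} \<phi>"
  have "length \<psi>s \<le> ?n"
    using \<psi>s card_subformulas_le distinct_card by metis
  have "size_ltl ?\<phi>' + (?n + 3) \<le> 2 ^ length \<psi>s * (?n\<^sup>2 + ?n + 3)"
    using \<psi>s(1) by (intro size_split_recurrent) (auto dest: subformulas_size_le)
  also have "\<dots> \<le> 2 ^ ?n * (8 ^ ?n * ?n)"
    using \<open>length \<psi>s \<le> ?n\<close> square_plus_le_eight_power[of ?n] size_ltl_pos[of \<phi>]
    by (intro mult_mono) (auto simp: power_increasing)
  also have "\<dots> = 4 ^ (2 * ?n) * ?n"
    by (simp add: power_mult power_mult_distrib[symmetric])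
  finally have "size_ltl ?\<phi>' \<le> 4 ^ (2 * ?n) * ?n"
    by simp
  moreover have "equiv_ltl ?\<phi>' \<phi>"
    using \<psi>s(1) by (simp add: equiv_ltl_def sat_split_recurrent_iff)
  ultimately show ?thesis
    using \<psi>s(1) first_normal_form_split_recurrent GF_subformulas_split_recurrent FG_subformulas_split_recurrent
    by blast
qed

end
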